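(* Let $\widehat{A}=A+\epsilon B$ and $\widehat{C}=C+\epsilon D$ with $A,B,C,D\in\mathbb{R}^{n\times n}$ be such that the dual Drazin generalized inverses of $\widehat{A}$, $\widehat{C}$ and $\widehat{A}\widehat{C}$ exist and have the particular form $\widehat{A}^{D}=A^{D}-\epsilon A^{D}BA^{D}$, $\widehat{C}^{D}=C^{D}-\epsilon C^{D}DC^{D}$, $(\widehat{A}\widehat{C})^{D}=(AC)^{D}-\epsilon (AC)^{D}(AD+BC)(AC)^{D}$. If $AC=CA$, $C^{D}B=BC^{D}$ and $A^{D}D=DA^{D}$, then $(\widehat{A}\widehat{C})^{D}=\widehat{A}^{D}\widehat{C}^{D}=\widehat{C}^{D}\widehat{A}^{D}$.
   Context: A dual number is $a+\epsilon b$ with $a,b\in\mathbb{R}$, where $\epsilon\neq 0$, $\epsilon^2=0$ and $\epsilon$ commutes with reals. A dual matrix is $A+\epsilon B$ with $A,B$ real; sums and products are computed formally using $\epsilon^2=0$, and equality means equality of real and dual parts. $\mathbb{D}^n$ is the set of dual column vectors of length $n$; the dual index $Ind(\widehat{A})$ of a square dual matrix is the smallest nonnegative integer $k$ with $\{\widehat{A}^k\widehat{z}:\widehat{z}\in\mathbb{D}^n\}=\{\widehat{A}^{k+1}\widehat{z}:\widehat{z}\in\mathbb{D}^n\}$. $A^D$ denotes the Drazin inverse of a real square matrix $A$. For $Ind(\widehat{A})=k$, the dual Drazin generalized inverse $\widehat{A}^D$ is the dual matrix $\widehat{X}$ (if it exists) with $\widehat{A}^{k}\widehat{X}\widehat{A}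 = \widehat{A}^{k}$, $\widehat{X}\widehat{A}\widehat{X} = \widehat{X}$, $\widehat{A}\widehat{X} =\widehat{X}\widehat{A}$. *)

theory Defs
  imports "HOL-Analysis.Analysis"
begin

definition mpow :: "real^('n::finite)^'n \<Rightarrow> nat \<Rightarrow> real^'n^'n" where
  "mpow A k = (((**) A) ^^ k) (mat 1)"

definition rindex :: "real^('n::finite)^'n \<Rightarrow> nat" where
  "rindex A = (LEAST k. range (\<lambda>z. mpow A k *v z) = range (\<lambda>z. mpow A (Suc k) *v z))"

definition is_drazin :: "real^('n::finite)^'n \<Rightarrow> real^'n^'n \<Rightarrow> bool" where
  "is_drazin A X \<longleftrightarrow>
     mpow A (rindex A) ** X ** A = mpow A (rindex A) \<and> X ** A ** X = X \<and> A ** X = X ** A"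

text \<open>The Drazin inverse A^D (it exists and is unique for every real square matrix).\<close>
definition drazin :: "real^('n::finite)^'n \<Rightarrow> real^'n^'n" where
  "drazin A = (THE X. is_drazin A X)"

section \<open>Dual matrices A + eps B, represented as pairs (A, B)\<close>

type_synonym 'n dmat = "(real^'n^'n) \<times> (real^'n^'n)"
type_synonym 'n dvec = "(real^'n) \<times> (real^'n)"

definition dmult :: "('n::finite) dmat \<Rightarrow> 'n dmat \<Rightarrow> 'n dmat" where
  "dmult P Q = (fst P ** fst Q, fst P ** snd Q + snd P ** fst Q)"

definition dmv :: "('n::finite) dmat \<Rightarrow> ('n::finite) dvec \<Rightarrow> 'n dvec" where
  "dmv P z = (fst P *v fst z, fst P *v snd z + snd P *v fst z)"

definition done_id :: "('n::finite) dmat" where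
  "done_id = (mat 1, 0)"

definition dpow :: "('n::finite) dmat \<Rightarrow> nat \<Rightarrow> 'n dmat" where
  "dpow P k = ((dmult P) ^^ k) done_id"

definition dindex :: "('n::finite) dmat \<Rightarrow> nat" where
  "dindex P = (LEAST k. range (dmv (dpow P k)) = range (dmv (dpow P (Suc k))))"

definition is_ddrazin :: "('n::finite) dmat \<Rightarrow> 'n dmat \<Rightarrow> bool" where
  "is_ddrazin P X \<longleftrightarrow>
     dmult (dmult (dpow P (dindex P)) X) P = dpow P (dindex P) \<and>
     dmult (dmult X P) X = X \<and> dmult P X = dmult X P"

end

theory Submission
  imports Defs
begin

text \<open>They say that the real
  parts of the three given inverses satisfy the Drazin equations of \<open>A\<close>, \<open>C\<close> and \<open>AC\<close>, with the
  dual indices as exponents. These equations stay valid for every larger exponent and have at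
  most one solution for a fixed exponent. Since \<open>AC = CA\<close> forces \<open>A\<^sup>D\<close> to commute with \<open>C\<close> and
  \<open>C\<^sup>D\<close>, the product \<open>A\<^sup>D C\<^sup>D\<close> solves the Drazin equations of \<open>AC\<close>, so it is \<open>(AC)\<^sup>D\<close>.
  The dual parts then agree by a direct computation with the commutation hypotheses.\<close>

lemma matrix_mul_lneg: "(- (A::real^'n^'m)) ** (B::real^'p^'n) = - (A ** B)"
  by (vector matrix_matrix_mult_def sum_negf)

lemma matrix_mul_rneg: "(A::real^'n^'m) ** (- (B::real^'p^'n)) = - (A ** B)"
  by (vector matrix_matrix_mult_def sum_negf)

lemma matrix_add_rdistrib: "((A::real^'n^'m) + B) ** (C::real^'p^'n) = A ** C + B ** C"
  by (vector matrix_matrix_mult_def sum.distrib[symmetric] field_simps)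

lemma mpow_0 [simp]: "mpow A 0 = mat 1"
  by (simp add: mpow_def)

lemma mpow_Suc: "mpow A (Suc k) = A ** mpow A k"
  by (simp add: mpow_def)

lemma mpow_commute: "A ** X = X ** A \<Longrightarrow> mpow A k ** X = X ** mpow A k"
proof (induction k)
  case 0
  then show ?case by simp
next
  case (Suc k)
  have "mpow A (Suc k) ** X = A ** (mpow A k ** X)"
    by (simp add: mpow_Suc matrix_mul_assoc)
  also have "\<dots> = (A ** X) ** mpow A k"
    using Suc by (simp add: matrix_mul_assoc)
  also have "\<dots> = X ** mpow A (Suc k)"
    using Suc.prems by (simp add: mpow_Suc matrix_mul_assoc)
  finally show ?case .
qed

lemma mpow_Suc_right: "mpow A (Suc k) = mpow A k ** A"
  by (simp add: mpow_Suc mpow_commute)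

lemma mpow_add: "mpow A (k + m) = mpow A k ** mpow A m"
  by (induction k) (simp_all add: mpow_Suc matrix_mul_assoc)

lemma mpow_mult_commuting:
  assumes "A ** C = C ** A"
  shows "mpow (A ** C) k = mpow A k ** mpow C k"
proof (induction k)
  case 0
  then show ?case by simp
next
  case (Suc k)
  have "mpow (A ** C) (Suc k) = A ** (C ** mpow A k) ** mpow C k"
    using Suc by (simp add: mpow_Suc matrix_mul_assoc)
  also have "\<dots> = A ** (mpow A k ** C) ** mpow C k"
    using mpow_commute[OF assms] by metis
  also have "\<dots> = mpow A (Suc k) ** mpow C (Suc k)"
    by (simp add: mpow_Suc matrix_mul_assoc)
  finally show ?case .
qed

definition is_drazin_at :: "real^('n::finite)^'n \<Rightarrow> real^'n^'n \<Rightarrow> nat \<Rightarrow> bool" where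
  "is_drazin_at A X k \<longleftrightarrow>
     mpow A k ** X ** A = mpow A k \<and> X ** A ** X = X \<and> A ** X = X ** A"

lemma is_drazin_at_mono:
  assumes "is_drazin_at A X k" and "k \<le> m"
  shows "is_drazin_at A X m"
proof -
  define j where "j = m - k"
  have m: "m = j + k"
    using assms(2) by (simp add: j_def)
  have "mpow A m ** X ** A = mpow A j ** (mpow A k ** X ** A)"
    by (simp add: m mpow_add matrix_mul_assoc)
  also have "\<dots> = mpow A m"
    using assms(1) by (simp add: is_drazin_at_def m mpow_add)
  finally show ?thesis
    using assms(1) by (simp add: is_drazin_at_def)
qed

lemma is_drazin_at_right_factor:
  assumes "is_drazin_at A X k"
  shows "\<exists>Z. X = Z ** mpow A k"
proof (induction k)
  case 0
  show ?case by (rule exI[of _ X]) simp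
next
  case (Suc k)
  then obtain Z where Z: "X = Z ** mpow A k" by blast
  have "X = X ** A ** X"
    using assms by (simp add: is_drazin_at_def)
  also have "\<dots> = X ** X ** A"
    using assms unfolding is_drazin_at_def by (metis matrix_mul_assoc)
  also have "\<dots> = (X ** Z) ** mpow A (Suc k)"
    by (subst (2) Z) (simp add: mpow_Suc_right matrix_mul_assoc)
  finally show ?case by blast
qed

lemma is_drazin_at_left_factor:
  assumes "is_drazin_at A X k"
  shows "\<exists>W. X = mpow A k ** W"
proof (induction k)
  case 0
  show ?case by (rule exI[of _ X]) simp
next
  case (Suc k)
  then obtain W where W: "X = mpow A k ** W" by blast
  have "X = A ** X ** X"
    using assms by (simp add: is_drazin_at_def)
  also have "\<dots> = mpow A (Suc k) ** (W ** X)"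
    by (subst (1) W) (simp add: mpow_Suc matrix_mul_assoc)
  finally show ?case by blast
qed

lemma is_drazin_at_absorb:
  assumes "is_drazin_at A X k"
  shows "X ** A ** mpow A k = mpow A k"
proof -
  have "X ** A ** mpow A k = (mpow A k ** X) ** A"
    using mpow_commute assms unfolding is_drazin_at_def
    by (metis matrix_mul_assoc)
  then show ?thesis
    using assms by (simp add: is_drazin_at_def)
qed

lemma is_drazin_at_unique:
  assumes X: "is_drazin_at A X k" and Y: "is_drazin_at A Y k"
  shows "X = Y"
proof -
  obtain Z where Z: "X = Z ** mpow A k"
    using is_drazin_at_right_factor[OF X] by blast
  obtain W where W: "Y = mpow A k ** W"
    using is_drazin_at_left_factor[OF Y] by blast
  have AY: "A ** Y = Y ** A"
    using Y by (simp add: is_drazin_at_def)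
  have "X = Z ** (mpow A k ** Y ** A)"
    using Z Y by (simp add: is_drazin_at_def)
  also have "\<dots> = Z ** (mpow A k ** A ** Y)"
    using AY by (metis matrix_mul_assoc)
  also have "\<dots> = X ** A ** Y"
    using Z by (simp add: matrix_mul_assoc)
  also have "\<dots> = X ** A ** mpow A k ** W"
    using W by (simp add: matrix_mul_assoc)
  also have "\<dots> = Y"
    using W is_drazin_at_absorb[OF X] by simp
  finally show ?thesis .
qed

lemma is_drazin_at_commute:
  assumes X: "is_drazin_at A X k" and AC: "A ** C = C ** A"
  shows "X ** C = C ** X"
proof -
  obtain Z where Z: "X = Z ** mpow A k"
    using is_drazin_at_right_factor[OF X] by blast
  obtain W where W: "X = mpow A k ** W"
    using is_drazin_at_left_factor[OF X] by blast
  have AkAX: "mpow A k ** A ** X = mpow A k"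
    using X unfolding is_drazin_at_def by (metis matrix_mul_assoc)
  have CAk: "mpow A k ** C = C ** mpow A k"
    using AC mpow_commute by metis
  have "X ** C = Z ** (C ** mpow A k)"
    using Z CAk by (metis matrix_mul_assoc)
  also have "\<dots> = Z ** (C ** (mpow A k ** A ** X))"
    using AkAX by simp
  also have "\<dots> = Z ** (mpow A k ** C) ** A ** X"
    using CAk by (simp add: matrix_mul_assoc)
  also have "\<dots> = X ** (C ** A) ** X"
    using Z by (simp add: matrix_mul_assoc)
  finally have XC: "X ** C = X ** (C ** A) ** X" .
  have "C ** X = (C ** mpow A k) ** W"
    using W by (simp add: matrix_mul_assoc)
  also have "\<dots> = (X ** A ** mpow A k ** C) ** W"
    using CAk is_drazin_at_absorb[OF X] by simp
  also have "\<dots> = X ** A ** (C ** mpow A k) ** W"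
    using CAk by (metis matrix_mul_assoc)
  also have "\<dots> = X ** (A ** C) ** X"
    using W by (simp add: matrix_mul_assoc)
  finally have CX: "C ** X = X ** (A ** C) ** X" .
  show ?thesis
    using XC CX AC by simp
qed

lemma is_drazin_at_mult:
  assumes X: "is_drazin_at A X k" and Y: "is_drazin_at C Y k" and AC: "A ** C = C ** A"
  shows "is_drazin_at (A ** C) (X ** Y) k"
proof -
  have XC: "X ** C = C ** X" and YA: "Y ** A = A ** Y"
    using is_drazin_at_commute X Y AC by metis+
  have XY: "X ** Y = Y ** X"
    using is_drazin_at_commute[OF X] YA by metis
  have AX: "A ** X = X ** A" and XAX: "X ** A ** X = X" and EA: "mpow A k ** X ** A = mpow A k"
    using X by (auto simp: is_drazin_at_def)
  have CY: "C ** Y = Y ** C" and YCY: "Y ** C ** Y = Y" and EC: "mpow C k ** Y ** C = mpow C k"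
    using Y by (auto simp: is_drazin_at_def)
  have CkX: "mpow C k ** X = X ** mpow C k" and CkA: "mpow C k ** A = A ** mpow C k"
    using mpow_commute XC AC by metis+
  have "mpow (A ** C) k ** (X ** Y) ** (A ** C) = mpow A k ** (mpow C k ** X) ** Y ** A ** C"
    using mpow_mult_commuting[OF AC] by (simp add: matrix_mul_assoc)
  also have "\<dots> = mpow A k ** X ** (mpow C k ** A) ** Y ** C"
    using CkX YA by (metis matrix_mul_assoc)
  also have "\<dots> = (mpow A k ** X ** A) ** (mpow C k ** Y ** C)"
    using CkA by (metis matrix_mul_assoc)
  finally have 1: "mpow (A ** C) k ** (X ** Y) ** (A ** C) = mpow (A ** C) k"
    using EA EC mpow_mult_commuting[OF AC] by simp
  have "X ** Y ** (A ** C) ** (X ** Y) = X ** (Y ** A) ** (C ** X) ** Y"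
    by (simp add: matrix_mul_assoc)
  also have "\<dots> = X ** (A ** Y) ** (X ** C) ** Y"
    by (simp only: YA XC[symmetric])
  also have "\<dots> = X ** A ** (Y ** X) ** C ** Y"
    by (simp add: matrix_mul_assoc)
  also have "\<dots> = (X ** A ** X) ** (Y ** C ** Y)"
    using XY by (metis matrix_mul_assoc)
  finally have 2: "X ** Y ** (A ** C) ** (X ** Y) = X ** Y"
    using XAX YCY by simp
  have "A ** C ** (X ** Y) = (A ** X) ** (C ** Y)"
    using XC by (metis matrix_mul_assoc)
  also have "\<dots> = X ** (A ** Y) ** C"
    using AX CY by (simp add: matrix_mul_assoc)
  finally have 3: "A ** C ** (X ** Y) = X ** Y ** (A ** C)"
    using YA by (metis matrix_mul_assoc)
  show ?thesis
    using 1 2 3 by (simp add: is_drazin_at_def)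
qed

lemma fst_dpow: "fst (dpow P k) = mpow (fst P) k"
  by (induction k) (simp_all add: dpow_def done_id_def mpow_Suc dmult_def)

lemma is_ddrazin_fst:
  assumes "is_ddrazin P X"
  shows "is_drazin_at (fst P) (fst X) (dindex P)"
proof -
  have "fst (dmult (dmult (dpow P (dindex P)) X) P) = fst (dpow P (dindex P))"
    and "fst (dmult (dmult X P) X) = fst X" and "fst (dmult P X) = fst (dmult X P)"
    using assms unfolding is_ddrazin_def by auto
  then show ?thesis
    by (simp add: is_drazin_at_def dmult_def fst_dpow)
qed

lemma dmult_first_order_drazin:
  assumes XAX: "X ** A ** X = X" and YCY: "Y ** C ** Y = Y"
    and XC: "X ** C = C ** X" and YA: "Y ** A = A ** Y"
    and XD: "X ** D = D ** X" and YB: "Y ** B = B ** Y" and XY: "X ** Y = Y ** X"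
  shows "dmult (X, - (X ** B ** X)) (Y, - (Y ** D ** Y))
           = (X ** Y, - (X ** Y ** (A ** D + B ** C) ** (X ** Y)))"
    and "dmult (X, - (X ** B ** X)) (Y, - (Y ** D ** Y))
           = dmult (Y, - (Y ** D ** Y)) (X, - (X ** B ** X))"
proof -
  have "X ** Y ** (A ** D) ** (X ** Y) = X ** A ** Y ** (D ** X) ** Y"
    using YA by (metis matrix_mul_assoc)
  also have "\<dots> = X ** A ** (Y ** X) ** D ** Y"
    using XD by (metis matrix_mul_assoc)
  also have "\<dots> = (X ** A ** X) ** (Y ** D ** Y)"
    using XY by (metis matrix_mul_assoc)
  finally have AD: "X ** Y ** (A ** D) ** (X ** Y) = X ** (Y ** D ** Y)"
    using XAX by simp
  have "X ** Y ** (B ** C) ** (X ** Y) = X ** B ** Y ** (C ** X) ** Y"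
    using YB by (metis matrix_mul_assoc)
  also have "\<dots> = X ** B ** (Y ** X) ** C ** Y"
    using XC by (metis matrix_mul_assoc)
  also have "\<dots> = (X ** B ** X) ** (Y ** C ** Y)"
    using XY by (metis matrix_mul_assoc)
  finally have BC: "X ** Y ** (B ** C) ** (X ** Y) = X ** B ** X ** Y"
    using YCY by (simp add: matrix_mul_assoc)
  have "Y ** (X ** B ** X) = X ** (Y ** B) ** X"
    using XY by (metis matrix_mul_assoc)
  also have "\<dots> = X ** B ** X ** Y"
    using YB XY by (metis matrix_mul_assoc)
  finally have XBX: "Y ** (X ** B ** X) = X ** B ** X ** Y" .
  have "Y ** D ** Y ** X = Y ** (D ** X) ** Y"
    using XY by (metis matrix_mul_assoc)
  also have "\<dots> = X ** (Y ** D ** Y)"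
    using XD XY by (metis matrix_mul_assoc)
  finally have YDY: "Y ** D ** Y ** X = X ** (Y ** D ** Y)" .
  show "dmult (X, - (X ** B ** X)) (Y, - (Y ** D ** Y))
          = (X ** Y, - (X ** Y ** (A ** D + B ** C) ** (X ** Y)))"
    by (simp add: dmult_def matrix_add_ldistrib matrix_add_rdistrib matrix_mul_lneg
        matrix_mul_rneg AD BC)
  show "dmult (X, - (X ** B ** X)) (Y, - (Y ** D ** Y))
          = dmult (Y, - (Y ** D ** Y)) (X, - (X ** B ** X))"
    by (simp add: dmult_def matrix_mul_lneg matrix_mul_rneg XBX YDY XY)
qed

theorem mainTheorem7:
  fixes A B C D :: "real^('n::finite)^'n"
  assumes hA: "is_ddrazin (A, B) (drazin A, - (drazin A ** B ** drazin A))"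
      and hC: "is_ddrazin (C, D) (drazin C, - (drazin C ** D ** drazin C))"
      and hAC: "is_ddrazin (dmult (A, B) (C, D))
                  (drazin (A ** C), - (drazin (A ** C) ** (A ** D + B ** C) ** drazin (A ** C)))"
      and comm1: "A ** C = C ** A"
      and comm2: "drazin C ** B = B ** drazin C"
      and comm3: "drazin A ** D = D ** drazin A"
  shows "(drazin (A ** C), - (drazin (A ** C) ** (A ** D + B ** C) ** drazin (A ** C)))
           = dmult (drazin A, - (drazin A ** B ** drazin A)) (drazin C, - (drazin C ** D ** drazin C))
       \<and> dmult (drazin A, - (drazin A ** B ** drazin A)) (drazin C, - (drazin C ** D ** drazin C))
           = dmult (drazin C, - (drazin C ** D ** drazin C)) (drazin A, - (drazin A ** B ** drazin A))"
proof -
  define k where "k = dindex (A, B) + dindex (C, D) + dindex (dmult (A, B) (C, D))"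
  have XA: "is_drazin_at A (drazin A) k"
    using is_drazin_at_mono[OF is_ddrazin_fst[OF hA]] by (simp add: k_def)
  have XC: "is_drazin_at C (drazin C) k"
    using is_drazin_at_mono[OF is_ddrazin_fst[OF hC]] by (simp add: k_def)
  have XAC: "is_drazin_at (A ** C) (drazin (A ** C)) k"
    using is_drazin_at_mono[OF is_ddrazin_fst[OF hAC]] by (simp add: k_def dmult_def)
  have AD_C: "drazin A ** C = C ** drazin A" and CD_A: "drazin C ** A = A ** drazin C"
    using is_drazin_at_commute XA XC comm1 by metis+
  have AD_CD: "drazin A ** drazin C = drazin C ** drazin A"
    using is_drazin_at_commute[OF XA] CD_A by metis
  have AD_outer: "drazin A ** A ** drazin A = drazin A"
    and CD_outer: "drazin C ** C ** drazin C = drazin C"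
    using XA XC by (simp_all add: is_drazin_at_def)
  have "drazin (A ** C) = drazin A ** drazin C"
    using is_drazin_at_unique[OF XAC is_drazin_at_mult[OF XA XC comm1]] .
  then show ?thesis
    using dmult_first_order_drazin[OF AD_outer CD_outer AD_C CD_A comm3 comm2 AD_CD] by simp
qed

end
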